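(* Suppose $P$ has a positive real eigenvalue different from $1$, and let $\theta$ be the largest positive real eigenvalue of $P$ different from $1$. Let $\mathcal G$ be a finite nonempty collection of allowed words such that some symbol $i\in\Sigma$ occurs in every word of $\mathcal G$. Then $0<\rho(H_{\mathcal G})\le-\ln\theta$.
   Context: Let $\Sigma=\{1,\dots,N\}$, $A$ an irreducible $N\times N$ $0$–$1$ matrix, $\Sigma_A=\{x\in\Sigma^{\mathbb N}:A_{x_nx_{n+1}}=1\ \forall n\}$ with left shift $\sigma$. A word is allowed if it occurs in some element of $\Sigma_A$; $C_u$ is the set of $x\in\Sigma_A$ beginning with $u$. $P$ is a row-stochastic matrix with $P_{ij}>0$ iff $A_{ij}=1$, $\mathbf p$ its stationary vector, $\mu=\mu_P$ the Markov measure $\mu(C_w)=p_{w_1}P_{w_1w_2}\cdots P_{w_{n-1}w_n}$. For a finite collection $\mathcal G$ of allowed words, $H_{\mathcal G}=\bigcup_{w\in\mathcal G}C_w$. For a hole $H$, $\mathcal W_m=\{x:\sigma^ix\notin H,0\le i\le m\}$ and $\rho(H)=-\lim_m\frac1m\ln\mu(\mathcal W_m)$. *)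

theory Defs
  imports "HOL-Analysis.Analysis"
begin

text \<open>The alphabet Sigma = {1..N} is modelled by a finite type 'n (N = CARD('n)).
  Matrices are real^'n^'n, entry (i,j) is M$i$j.\<close>

fun mpow :: "real^'n^'n \<Rightarrow> nat \<Rightarrow> real^'n^'n" where
  "mpow M 0 = mat 1"
| "mpow M (Suc k) = M ** mpow M k"

definition zero_one_matrix :: "real^'n^'n \<Rightarrow> bool" where
  "zero_one_matrix A \<longleftrightarrow> (\<forall>i j. A$i$j = 0 \<or> A$i$j = 1)"

definition irreducible_matrix :: "real^'n^'n \<Rightarrow> bool" where
  "irreducible_matrix A \<longleftrightarrow> (\<forall>i j. \<exists>k\<ge>1. (mpow A k)$i$j > 0)"

definition row_stochastic :: "real^'n^'n \<Rightarrow> bool" where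
  "row_stochastic P \<longleftrightarrow> (\<forall>i j. P$i$j \<ge> 0) \<and> (\<forall>i. (\<Sum>j\<in>UNIV. P$i$j) = 1)"

definition stationary_vector :: "real^'n^'n \<Rightarrow> real^'n \<Rightarrow> bool" where
  "stationary_vector P p \<longleftrightarrow> (\<forall>i. p$i \<ge> 0) \<and> (\<Sum>i\<in>UNIV. p$i) = 1 \<and> p v* P = p"

definition real_eigenvalue :: "real^'n^'n \<Rightarrow> real \<Rightarrow> bool" where
  "real_eigenvalue M t \<longleftrightarrow> (\<exists>v. v \<noteq> 0 \<and> M *v v = t *s v)"

definition SFT :: "real^'n^'n \<Rightarrow> (nat \<Rightarrow> 'n) set" where
  "SFT A = {x. \<forall>k. A$(x k)$(x (Suc k)) = 1}"

definition shift_pow :: "nat \<Rightarrow> (nat \<Rightarrow> 'n) \<Rightarrow> (nat \<Rightarrow> 'n)" where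
  "shift_pow i x = (\<lambda>k. x (k + i))"

definition cylinder :: "real^'n^'n \<Rightarrow> 'n list \<Rightarrow> (nat \<Rightarrow> 'n) set" where
  "cylinder A u = {x \<in> SFT A. \<forall>k<length u. x k = u ! k}"

definition allowed_word :: "real^'n^'n \<Rightarrow> 'n list \<Rightarrow> bool" where
  "allowed_word A u \<longleftrightarrow> (\<exists>x\<in>SFT A. \<exists>m. \<forall>k<length u. x (m + k) = u ! k)"

definition hole :: "real^'n^'n \<Rightarrow> 'n list set \<Rightarrow> (nat \<Rightarrow> 'n) set" where
  "hole A G = (\<Union>w\<in>G. cylinder A w)"

definition survivors :: "real^'n^'n \<Rightarrow> (nat \<Rightarrow> 'n) set \<Rightarrow> nat \<Rightarrow> (nat \<Rightarrow> 'n) set" where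
  "survivors A H m = {x \<in> SFT A. \<forall>i\<le>m. shift_pow i x \<notin> H}"

definition markov_cyl :: "real^'n^'n \<Rightarrow> real^'n \<Rightarrow> 'n list \<Rightarrow> real" where
  "markov_cyl P p w =
     (if w = [] then 1 else p$(hd w) * (\<Prod>k<length w - 1. P$(w!k)$(w!(Suc k))))"

text \<open>Markov measure of a set S that is a union of cylinders of length n
  (i.e. S depends only on the first n coordinates): the sum of the cylinder
  measures of the length-n cylinders contained in S (cylinders are disjoint).\<close>

definition markov_meas_fin ::
  "real^'n^'n \<Rightarrow> real^'n^'n \<Rightarrow> real^'n \<Rightarrow> nat \<Rightarrow> (nat \<Rightarrow> 'n) set \<Rightarrow> real" where
  "markov_meas_fin A P p n S =
     (\<Sum>w\<in>{w. length w = n \<and> cylinder A w \<subseteq> S}. markov_cyl P p w)"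

text \<open>mu(W_m) for the hole H_G: W_m depends only on the first m + L coordinates,
  L the maximal length of a word in G.\<close>

definition survival_prob ::
  "real^'n^'n \<Rightarrow> real^'n^'n \<Rightarrow> real^'n \<Rightarrow> 'n list set \<Rightarrow> nat \<Rightarrow> real" where
  "survival_prob A P p G m =
     markov_meas_fin A P p (m + Max (length ` G)) (survivors A (hole A G) m)"

end

theory Submission
  imports Defs
begin

(* Let a(n) be the mu-measure of the words of length n containing no word of G, and L the
   maximal length of a word in G. A cylinder of length m + L free of G lies in W_m, and every
   admissible cylinder of length m + L inside W_m has a G-free prefix of length m + 1, so
   a(m + L) <= mu(W_m) <= a(m + 1) and rho(H_G) is the exponential decay rate of a(n).

   Splitting a G-free word after its first m letters and conditioning on the first letter gives
   min_j p_j * a(m + n) <= a(m) * a(n); by Fekete's lemma the rate exists, and it is positive since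
   from every symbol an admissible path runs into a word of G, so a(n) < min_j p_j for some n.

   Since P is stochastic, theta < 1. Replacing a theta-eigenvector s by -s if necessary, the function
   h = s - s(i) vanishes at the common symbol i, is positive somewhere and satisfies
   theta * h <= P h. Iterating this for the chain killed at i bounds the mass of the words avoiding
   i, which are G-free, from below by c * theta^n; hence the rate is at most -ln theta. *)

section \<open>Fekete's lemma\<close>

lemma superadditive_mult:
  fixes F :: "nat \<Rightarrow> real"
  assumes superadd: "\<And>m n. m \<ge> 1 \<Longrightarrow> n \<ge> 1 \<Longrightarrow> F m + F n \<le> F (m + n)"
    and k: "k \<ge> 1" and q: "q \<ge> 1"
  shows "real q * F k \<le> F (q * k)"
  using q
proof (induction q rule: nat_induct_at_least)
  case (Suc q)
  have "real (Suc q) * F k \<le> F (q * k) + F k"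
    using Suc.IH by (simp add: algebra_simps)
  also have "\<dots> \<le> F (q * k + k)"
    using superadd[of "q * k" k] Suc.hyps k by simp
  finally show ?case by (simp add: add.commute)
qed simp

lemma superadditive_ratio_lower:
  fixes F :: "nat \<Rightarrow> real"
  assumes superadd: "\<And>m n. m \<ge> 1 \<Longrightarrow> n \<ge> 1 \<Longrightarrow> F m + F n \<le> F (m + n)"
    and k: "k \<ge> 1"
  obtains D where "\<And>n. n \<ge> k \<Longrightarrow> F k / real k - D / real n \<le> F n / real n"
proof -
  obtain c where c: "c \<le> 0" "\<And>r. r \<in> {1..<k} \<Longrightarrow> c \<le> F r"
    by (rule that[of "min 0 (Min (F ` {1..<k}))"]) (auto intro: min.coboundedI2)
  have "F k / real k - (\<bar>F k\<bar> - c) / real n \<le> F n / real n" if n: "n \<ge> k" for n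
  proof -
    define q r where "q = n div k" and "r = n mod k"
    have n_eq: "n = q * k + r" and r: "r < k" and q1: "q \<ge> 1"
      using n k by (auto simp: q_def r_def Suc_le_eq div_greater_zero_iff)
    have "real q * F k + c \<le> F n"
    proof (cases "r = 0")
      case True
      then show ?thesis using superadditive_mult[OF superadd k q1] c(1) n_eq by simp
    next
      case False
      have "real q * F k + c \<le> F (q * k) + F r"
        using superadditive_mult[OF superadd k q1] c(2)[of r] False r by simp
      also have "\<dots> \<le> F n"
        using superadd[of "q * k" r] n_eq q1 k False by (simp add: Suc_le_eq)
      finally show ?thesis .
    qed
    moreover have "real n * (F k / real k) \<le> real q * F k + \<bar>F k\<bar>"
    proof -
      have "real n * (F k / real k) = real q * F k + real r / real k * F k"
        using n_eq k by (simp add: field_simps)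
      moreover have "real r / real k * F k \<le> real r / real k * \<bar>F k\<bar>"
        by (intro mult_left_mono) auto
      moreover have "\<dots> \<le> \<bar>F k\<bar>"
        using r by (intro mult_left_le_one_le) auto
      ultimately show ?thesis by simp
    qed
    ultimately have "real n * (F k / real k) - (\<bar>F k\<bar> - c) \<le> F n" by simp
    then have "(real n * (F k / real k) - (\<bar>F k\<bar> - c)) / real n \<le> F n / real n"
      by (rule divide_right_mono) simp
    then show ?thesis
      using n k by (simp add: diff_divide_distrib)
  qed
  then show ?thesis by (rule that)
qed

lemma superadditive_ratio_tendsto_Sup:
  fixes F :: "nat \<Rightarrow> real"
  assumes superadd: "\<And>m n. m \<ge> 1 \<Longrightarrow> n \<ge> 1 \<Longrightarrow> F m + F n \<le> F (m + n)"
    and bdd: "bdd_above ((\<lambda>n. F n / real n) ` {1..})"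
  shows "(\<lambda>n. F n / real n) \<longlonglongrightarrow> (SUP n\<in>{1..}. F n / real n)"
proof (rule order_tendstoI)
  fix a assume "a < (SUP n\<in>{1..}. F n / real n)"
  then obtain k where k: "k \<ge> 1" "a < F k / real k"
    using less_cSUP_iff[OF _ bdd] by auto
  obtain D where D: "\<And>n. n \<ge> k \<Longrightarrow> F k / real k - D / real n \<le> F n / real n"
    using superadditive_ratio_lower[OF superadd k(1)] by blast
  have "(\<lambda>n. F k / real k - D / real n) \<longlonglongrightarrow> F k / real k - 0"
    by (intro tendsto_diff tendsto_const lim_const_over_n)
  then have "\<forall>\<^sub>F n in sequentially. a < F k / real k - D / real n"
    using k(2) by (simp add: order_tendstoD(1))
  moreover have "\<forall>\<^sub>F n in sequentially. n \<ge> k"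
    by (rule eventually_ge_at_top)
  ultimately show "\<forall>\<^sub>F n in sequentially. a < F n / real n"
    by eventually_elim (use D in fastforce)
next
  fix a assume a: "(SUP n\<in>{1..}. F n / real n) < a"
  have "F n / real n < a" if "n \<ge> 1" for n
    using that a by (intro order.strict_trans1[OF cSUP_upper[OF _ bdd]]) auto
  then show "\<forall>\<^sub>F n in sequentially. F n / real n < a"
    by (rule eventually_sequentiallyI[of 1])
qed

lemma superadditive_ratio_limit:
  fixes F :: "nat \<Rightarrow> real"
  assumes superadd: "\<And>m n. m \<ge> 1 \<Longrightarrow> n \<ge> 1 \<Longrightarrow> F m + F n \<le> F (m + n)"
    and linear: "\<And>n. n \<ge> 1 \<Longrightarrow> F n \<le> \<alpha> + \<beta> * real n"
  obtains l where "(\<lambda>n. F n / real n) \<longlonglongrightarrow> l"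
    and "\<And>n. n \<ge> 1 \<Longrightarrow> F n / real n \<le> l" and "l \<le> \<beta>"
proof -
  have ratio_le: "F n / real n \<le> \<alpha> / real n + \<beta>" if "n \<ge> 1" for n
    using divide_right_mono[OF linear[OF that], of "real n"] that by (simp add: add_divide_distrib)
  have bdd: "bdd_above ((\<lambda>n. F n / real n) ` {1..})"
  proof (rule bdd_aboveI2)
    fix n :: nat assume n: "n \<in> {1..}"
    have "\<alpha> / real n \<le> \<bar>\<alpha>\<bar> / real n"
      by (rule divide_right_mono) simp_all
    also have "\<dots> \<le> \<bar>\<alpha>\<bar>"
      using n by (simp add: divide_le_eq mult_le_cancel_left1)
    finally show "F n / real n \<le> \<bar>\<alpha>\<bar> + \<beta>"
      using ratio_le[of n] n by simp
  qed
  define l where "l = (SUP n\<in>{1..}. F n / real n)"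
  have lim: "(\<lambda>n. F n / real n) \<longlonglongrightarrow> l"
    unfolding l_def using superadd bdd by (rule superadditive_ratio_tendsto_Sup)
  moreover have "F n / real n \<le> l" if "n \<ge> 1" for n
    unfolding l_def using that by (intro cSUP_upper bdd) simp
  moreover have "l \<le> \<beta>"
  proof (rule LIMSEQ_le[OF lim])
    show "(\<lambda>n. \<alpha> / real n + \<beta>) \<longlonglongrightarrow> \<beta>"
      using tendsto_add[OF lim_const_over_n[of \<alpha>] tendsto_const[of \<beta>]] by simp
    show "\<exists>N. \<forall>n\<ge>N. F n / real n \<le> \<alpha> / real n + \<beta>"
      using ratio_le by blast
  qed
  ultimately show ?thesis
    by (rule that)
qed

lemma LIMSEQ_ratio_shift:
  fixes f :: "nat \<Rightarrow> real"
  assumes "(\<lambda>n. f n / real n) \<longlonglongrightarrow> l"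
  shows "(\<lambda>m. f (m + a) / real m) \<longlonglongrightarrow> l"
proof -
  have "(\<lambda>m. f (m + a) / real (m + a) * (1 + real a / real m)) \<longlonglongrightarrow> l * (1 + 0)"
    by (intro tendsto_mult tendsto_add tendsto_const lim_const_over_n
        LIMSEQ_ignore_initial_segment[OF assms])
  moreover have "\<forall>\<^sub>F m in sequentially.
      f (m + a) / real (m + a) * (1 + real a / real m) = f (m + a) / real m"
  proof (rule eventually_sequentiallyI[of 1])
    fix m :: nat assume "m \<ge> 1"
    then have "1 + real a / real m = real (m + a) / real m"
      by (simp add: field_simps)
    then show "f (m + a) / real (m + a) * (1 + real a / real m) = f (m + a) / real m"
      using \<open>m \<ge> 1\<close> by simp
  qed
  ultimately show ?thesis
    by (simp add: Lim_transform_eventually)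
qed

section \<open>Words and path weights\<close>

lemma finite_length_eq_Collect: "finite {w :: 'a::finite list. length w = n \<and> Q w}"
  by (rule finite_subset[OF _ finite_lists_length_eq[of "UNIV :: 'a set" n]]) auto

lemma sum_length_Suc_snoc:
  fixes f :: "'a::finite list \<Rightarrow> 'b::comm_monoid_add"
  assumes "\<And>v l. length v = n \<Longrightarrow> Q (v @ [l]) = R v"
  shows "(\<Sum>w | length w = Suc n \<and> Q w. f w) = (\<Sum>v | length v = n \<and> R v. \<Sum>l\<in>UNIV. f (v @ [l]))"
proof -
  have "bij_betw (\<lambda>(v, l). v @ [l]) ({v. length v = n \<and> R v} \<times> UNIV) {w. length w = Suc n \<and> Q w}"
  proof (rule bij_betw_byWitness[where f' = "\<lambda>w. (butlast w, last w)"])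
    have "R (butlast w)" if "length w = Suc n" "Q w" for w
    proof -
      have "w = butlast w @ [last w]"
        using that(1) by (metis append_butlast_last_id list.size(3) nat.distinct(1))
      then show ?thesis using assms[of "butlast w" "last w"] that by simp
    qed
    then show "(\<lambda>w. (butlast w, last w)) ` {w. length w = Suc n \<and> Q w}
        \<subseteq> {v. length v = n \<and> R v} \<times> UNIV"
      by auto
  qed (use assms in \<open>auto simp: snoc_eq_iff_butlast\<close>)
  then show ?thesis
    by (simp add: sum.reindex_bij_betw[symmetric] sum.cartesian_product case_prod_unfold)
qed

fun path_weight :: "real^'n^'n \<Rightarrow> 'n list \<Rightarrow> real" where
  "path_weight P [] = 1"
| "path_weight P [a] = 1"
| "path_weight P (a # b # w) = P$a$b * path_weight P (b # w)"

lemma path_weight_conv_prod: "path_weight P w = (\<Prod>k<length w - 1. P$(w!k)$(w!Suc k))"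
proof (induction P w rule: path_weight.induct)
  case (3 P a b w)
  have "(\<Prod>k<length (a # b # w) - 1. P$((a # b # w)!k)$((a # b # w)!Suc k))
      = P$a$b * (\<Prod>k<length (b # w) - 1. P$((b # w)!k)$((b # w)!Suc k))"
    by (simp add: prod.lessThan_Suc_shift del: prod.lessThan_Suc)
  then show ?case using 3 by simp
qed simp_all

lemma markov_cyl_conv_path_weight: "w \<noteq> [] \<Longrightarrow> markov_cyl P p w = p$(hd w) * path_weight P w"
  by (simp add: markov_cyl_def path_weight_conv_prod)

lemma path_weight_append:
  "x \<noteq> [] \<Longrightarrow> y \<noteq> [] \<Longrightarrow>
    path_weight P (x @ y) = path_weight P x * P$(last x)$(hd y) * path_weight P y"
proof (induction P x rule: path_weight.induct)
  case (2 P a) then show ?case by (cases y) auto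
qed simp_all

lemma path_weight_snoc: "x \<noteq> [] \<Longrightarrow> path_weight P (x @ [l]) = path_weight P x * P$(last x)$l"
  using path_weight_append[of x "[l]" P] by simp

lemma path_weight_Cons: "y \<noteq> [] \<Longrightarrow> path_weight P (a # y) = P$a$(hd y) * path_weight P y"
  by (cases y) auto

lemma mpow_nonneg: "(\<And>i j. M$i$j \<ge> 0) \<Longrightarrow> (mpow M k)$i$j \<ge> (0::real)"
  by (induction k arbitrary: i j) (simp_all add: mat_def matrix_matrix_mult_def sum_nonneg)

lemma mpow_Suc_pos_obtain:
  assumes "zero_one_matrix A" and "(mpow A (Suc k))$i$j > 0"
  obtains m where "A$i$m = 1" and "(mpow A k)$m$j > 0"
proof -
  have "0 < (\<Sum>m\<in>UNIV. A$i$m * (mpow A k)$m$j)"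
    using assms(2) by (simp add: matrix_matrix_mult_def)
  then obtain m where m: "A$i$m * (mpow A k)$m$j > 0"
    by (meson not_le sum_nonpos)
  then have "A$i$m = 1"
    using assms(1) unfolding zero_one_matrix_def by (metis mult_zero_left order.irrefl)
  with m show ?thesis using that by simp
qed

definition contains_factor :: "'a list set \<Rightarrow> 'a list \<Rightarrow> bool" where
  "contains_factor G w \<longleftrightarrow> (\<exists>u\<in>G. \<exists>xs ys. w = xs @ u @ ys)"

lemma contains_factor_append_left: "contains_factor G x \<Longrightarrow> contains_factor G (x @ y)"
  unfolding contains_factor_def by (metis append.assoc)

lemma contains_factor_append_right: "contains_factor G y \<Longrightarrow> contains_factor G (x @ y)"
  unfolding contains_factor_def by (metis append.assoc)

lemma free_words_append_subset:
  assumes "m \<ge> 1"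
  shows "{w. length w = m + n \<and> hd w = j \<and> \<not> contains_factor G w}
    \<subseteq> (\<lambda>(x, y). x @ y) ` ({x. length x = m \<and> hd x = j \<and> \<not> contains_factor G x}
                           \<times> {y. length y = n \<and> \<not> contains_factor G y})"
proof
  fix w assume w: "w \<in> {w. length w = m + n \<and> hd w = j \<and> \<not> contains_factor G w}"
  then have "\<not> contains_factor G (take m w)" "\<not> contains_factor G (drop m w)"
    using contains_factor_append_left[of G "take m w" "drop m w"]
      contains_factor_append_right[of G "drop m w" "take m w"] by auto
  moreover have "hd (take m w) = j"
    using w assms by simp
  ultimately show "w \<in> (\<lambda>(x, y). x @ y) ` ({x. length x = m \<and> hd x = j \<and> \<not> contains_factor G x}
                           \<times> {y. length y = n \<and> \<not> contains_factor G y})"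
    using w by (intro image_eqI[of _ _ "(take m w, drop m w)"]) auto
qed

section \<open>Markov measures on a subshift of finite type\<close>

lemma obtain_argmax_finite_UNIV:
  fixes f :: "'a::finite \<Rightarrow> 'b::linorder"
  obtains k where "\<And>l. f l \<le> f k"
proof -
  have "Max (range f) \<in> range f" by (rule Max_in) auto
  then obtain k where "f k = Max (range f)" by (metis rangeE)
  then show ?thesis by (intro that[of k]) (simp add: Max_ge)
qed

locale markov_shift =
  fixes A P :: "real^'n^'n" and p :: "real^'n"
  assumes zero_one: "zero_one_matrix A" and irreducible: "irreducible_matrix A"
    and stochastic: "row_stochastic P" and P_pos_iff: "\<And>i j. P$i$j > 0 \<longleftrightarrow> A$i$j = 1"
    and stationary: "stationary_vector P p"
begin

lemma P_nonneg: "P$i$j \<ge> 0"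
  using stochastic by (simp add: row_stochastic_def)

lemma P_row_sum: "(\<Sum>j\<in>UNIV. P$i$j) = 1"
  using stochastic by (simp add: row_stochastic_def)

lemma sum_P_mult_const: "(\<Sum>j\<in>UNIV. P$i$j * c) = c"
  by (simp add: sum_distrib_right[symmetric] P_row_sum)

lemma p_nonneg: "p$j \<ge> 0"
  using stationary by (simp add: stationary_vector_def)

lemma p_sum: "(\<Sum>j\<in>UNIV. p$j) = 1"
  using stationary by (simp add: stationary_vector_def)

definition admissible :: "'n list \<Rightarrow> bool" where
  "admissible w \<longleftrightarrow> (\<forall>k. Suc k < length w \<longrightarrow> A$(w!k)$(w!Suc k) = 1)"

lemma admissible_Cons: "admissible (a # w) \<longleftrightarrow> w = [] \<or> A$a$(hd w) = 1 \<and> admissible w"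
  by (cases w) (auto simp: admissible_def less_Suc_eq_0_disj)

lemma admissible_glue: "admissible (xs @ [a]) \<Longrightarrow> admissible (a # ys) \<Longrightarrow> admissible (xs @ a # ys)"
proof (induction xs)
  case (Cons x xs)
  then show ?case
    by (cases xs) (auto simp: admissible_Cons)
qed simp

lemma path_weight_nonneg: "path_weight P w \<ge> 0"
  unfolding path_weight_conv_prod by (intro prod_nonneg) (auto intro: P_nonneg)

lemma path_weight_pos: "admissible w \<Longrightarrow> path_weight P w > 0"
  unfolding path_weight_conv_prod admissible_def by (intro prod_pos) (auto simp: P_pos_iff)

lemma path_weight_eq_0:
  assumes "\<not> admissible w"
  shows "path_weight P w = 0"
proof -
  obtain k where k: "Suc k < length w" "A$(w!k)$(w!Suc k) \<noteq> 1"
    using assms unfolding admissible_def by blast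
  then have "P$(w!k)$(w!Suc k) = 0"
    using P_pos_iff P_nonneg by (metis less_eq_real_def)
  then show ?thesis
    unfolding path_weight_conv_prod using k by (intro prod_zero bexI[of _ k]) auto
qed

lemma markov_cyl_nonneg: "markov_cyl P p w \<ge> 0"
  by (cases "w = []")
    (simp add: markov_cyl_def,
     simp add: markov_cyl_conv_path_weight p_nonneg path_weight_nonneg del: path_weight.simps)

lemma admissible_path_if_mpow_pos:
  "(mpow A k)$i$j > 0 \<Longrightarrow>
    \<exists>\<pi>. length \<pi> = Suc k \<and> hd \<pi> = i \<and> last \<pi> = j \<and> admissible \<pi>"
proof (induction k arbitrary: i)
  case 0
  then show ?case by (intro exI[of _ "[i]"]) (simp add: mat_def admissible_def split: if_splits)
next
  case (Suc k)
  then obtain m where "A$i$m = 1" "(mpow A k)$m$j > 0"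
    using mpow_Suc_pos_obtain[OF zero_one] by blast
  with Suc.IH obtain \<pi> where "length \<pi> = Suc k" "hd \<pi> = m" "last \<pi> = j" "admissible \<pi>"
    by blast
  then show ?case
    using \<open>A$i$m = 1\<close> by (intro exI[of _ "i # \<pi>"]) (auto simp: admissible_Cons)
qed

lemma mpow_P_pos_if_mpow_A_pos: "(mpow A k)$i$j > 0 \<Longrightarrow> (mpow P k)$i$j > 0"
proof (induction k arbitrary: i)
  case 0 then show ?case by (simp add: mat_def split: if_splits)
next
  case (Suc k)
  then obtain m where "A$i$m = 1" "(mpow A k)$m$j > 0"
    using mpow_Suc_pos_obtain[OF zero_one] by blast
  then have "0 < P$i$m * (mpow P k)$m$j"
    using Suc.IH P_pos_iff by simp
  also have "\<dots> \<le> (\<Sum>l\<in>UNIV. P$i$l * (mpow P k)$l$j)"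
    by (rule member_le_sum) (auto intro: mult_nonneg_nonneg P_nonneg mpow_nonneg)
  finally show ?case by (simp add: matrix_matrix_mult_def)
qed

lemma stationary_mpow: "p v* mpow P k = p"
proof (induction k)
  case 0 then show ?case
    by (simp add: vector_matrix_mult_def mat_def vec_eq_iff if_distrib sum.delta cong: if_cong)
next
  case (Suc k)
  then show ?case
    using stationary by (simp add: stationary_vector_def vector_matrix_mul_assoc[symmetric])
qed

text \<open>Irreducibility spreads the mass of the stationary vector to every symbol.\<close>

lemma p_pos: "p$j > 0"
proof -
  obtain l where l: "p$l > 0"
    using p_sum p_nonneg by (metis order.not_eq_order_implies_strict sum.neutral zero_neq_one)
  obtain k where "(mpow A k)$l$j > 0"
    using irreducible unfolding irreducible_matrix_def by blast
  then have "(mpow P k)$l$j > 0" by (rule mpow_P_pos_if_mpow_A_pos)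
  with l have "0 < p$l * (mpow P k)$l$j" by simp
  also have "\<dots> \<le> (\<Sum>i\<in>UNIV. p$i * (mpow P k)$i$j)"
    by (rule member_le_sum) (auto intro: mult_nonneg_nonneg p_nonneg mpow_nonneg P_nonneg)
  also have "\<dots> = (p v* mpow P k)$j" by (simp add: vector_matrix_mult_def)
  finally show ?thesis by (simp add: stationary_mpow)
qed

lemma sum_path_weight_hd: "n \<ge> 1 \<Longrightarrow> (\<Sum>w | length w = n \<and> hd w = j. path_weight P w) = 1"
proof (induction n rule: nat_induct_at_least)
  case base
  have "{w. length w = 1 \<and> hd w = j} = {[j]}"
    by (auto simp: length_Suc_conv)
  then show ?case by simp
next
  case (Suc n)
  have "(\<Sum>w | length w = Suc n \<and> hd w = j. path_weight P w)
      = (\<Sum>v | length v = n \<and> hd v = j. \<Sum>l\<in>UNIV. path_weight P (v @ [l]))"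
    by (rule sum_length_Suc_snoc) (use Suc.hyps in \<open>auto simp: hd_append\<close>)
  also have "\<dots> = (\<Sum>v | length v = n \<and> hd v = j. path_weight P v)"
  proof (intro sum.cong refl)
    fix v assume "v \<in> {v. length v = n \<and> hd v = j}"
    then have "v \<noteq> []" using Suc.hyps by auto
    then show "(\<Sum>l\<in>UNIV. path_weight P (v @ [l])) = path_weight P v"
      by (simp add: path_weight_snoc sum_distrib_left[symmetric] P_row_sum)
  qed
  finally show ?case using Suc.IH by simp
qed

lemma sum_markov_cyl_prefix:
  assumes "n \<ge> 1"
  shows "(\<Sum>w | length w = n + k \<and> Q (take n w). markov_cyl P p w)
       = (\<Sum>v | length v = n \<and> Q v. markov_cyl P p v)"
proof (induction k)
  case (Suc k)
  have "(\<Sum>w | length w = Suc (n + k) \<and> Q (take n w). markov_cyl P p w)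
      = (\<Sum>v | length v = n + k \<and> Q (take n v). \<Sum>l\<in>UNIV. markov_cyl P p (v @ [l]))"
    by (rule sum_length_Suc_snoc) simp
  also have "\<dots> = (\<Sum>v | length v = n + k \<and> Q (take n v). markov_cyl P p v)"
  proof (intro sum.cong refl)
    fix v assume "v \<in> {v. length v = n + k \<and> Q (take n v)}"
    then have "v \<noteq> []" using assms by auto
    then show "(\<Sum>l\<in>UNIV. markov_cyl P p (v @ [l])) = markov_cyl P p v"
      by (simp add: markov_cyl_conv_path_weight path_weight_snoc mult.assoc
          sum_distrib_left[symmetric] P_row_sum)
  qed
  finally show ?case using Suc.IH by simp
qed (auto intro: sum.cong)

lemma admissible_extends_to_SFT:
  assumes adm: "admissible w" and ne: "w \<noteq> []"
  obtains x where "x \<in> SFT A" and "\<And>k. k < length w \<Longrightarrow> x k = w!k"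
proof -
  have "\<exists>l. A$j$l = 1" for j
  proof -
    obtain k where "k \<ge> 1" "(mpow A k)$j$j > 0"
      using irreducible unfolding irreducible_matrix_def by blast
    then show ?thesis
      using mpow_Suc_pos_obtain[OF zero_one, of "k - 1" j j] by (cases k) auto
  qed
  then obtain succ where succ: "\<And>j. A$j$(succ j) = 1" by metis
  define x where "x n = (if n < length w then w!n else (succ ^^ (n - (length w - 1))) (last w))" for n
  have "A$(x k)$(x (Suc k)) = 1" for k
  proof (cases "Suc k < length w")
    case True then show ?thesis using adm unfolding admissible_def x_def by auto
  next
    case False
    have "x k = (succ ^^ (k - (length w - 1))) (last w)"
    proof (cases "Suc k = length w")
      case True
      then show ?thesis using ne by (simp add: x_def last_conv_nth True[symmetric])
    qed (use False in \<open>simp add: x_def\<close>)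
    moreover have "x (Suc k) = (succ ^^ Suc (k - (length w - 1))) (last w)"
      using False by (simp add: x_def Suc_diff_le)
    ultimately show ?thesis using succ by simp
  qed
  then have "x \<in> SFT A" by (simp add: SFT_def)
  moreover have "x k = w!k" if "k < length w" for k
    using that by (simp add: x_def)
  ultimately show ?thesis by (rule that)
qed

lemma admissible_if_allowed_word:
  assumes "allowed_word A w"
  shows "admissible w"
proof -
  obtain x m where x: "\<And>k. A$(x k)$(x (Suc k)) = 1" "\<And>k. k < length w \<Longrightarrow> x (m + k) = w!k"
    using assms unfolding allowed_word_def SFT_def by blast
  show ?thesis unfolding admissible_def
  proof (intro allI impI)
    fix k assume "Suc k < length w"
    then have "w!k = x (m + k)" "w!Suc k = x (Suc (m + k))"
      using x(2)[of k] x(2)[of "Suc k"] by auto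
    then show "A$(w!k)$(w!Suc k) = 1" using x(1) by simp
  qed
qed

lemma abs_real_eigenvalue_le_1:
  assumes "real_eigenvalue P \<theta>"
  shows "\<bar>\<theta>\<bar> \<le> 1"
proof -
  obtain v where v: "v \<noteq> 0" "P *v v = \<theta> *s v"
    using assms unfolding real_eigenvalue_def by blast
  obtain k where k: "\<And>l. \<bar>v$l\<bar> \<le> \<bar>v$k\<bar>"
    using obtain_argmax_finite_UNIV[of "\<lambda>l. \<bar>v$l\<bar>"] by metis
  have "\<bar>v$k\<bar> > 0"
    using v(1) k by (metis abs_ge_zero abs_le_zero_iff order_less_le vec_eq_iff zero_index)
  moreover have "\<bar>\<theta>\<bar> * \<bar>v$k\<bar> \<le> \<bar>v$k\<bar>"
  proof -
    have "\<bar>\<theta>\<bar> * \<bar>v$k\<bar> = \<bar>\<Sum>l\<in>UNIV. P$k$l * v$l\<bar>"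
      using v(2) by (simp add: vec_eq_iff matrix_vector_mult_def abs_mult)
    also have "\<dots> \<le> (\<Sum>l\<in>UNIV. P$k$l * \<bar>v$k\<bar>)"
      by (rule order.trans[OF sum_abs sum_mono]) (simp add: abs_mult P_nonneg mult_left_mono k)
    also have "\<dots> = \<bar>v$k\<bar>"
      by (rule sum_P_mult_const)
    finally show ?thesis .
  qed
  ultimately show ?thesis
    by (simp add: mult_le_cancel_right2)
qed

text \<open>Maximum principle: for an eigenvalue below 1 the maximum of an eigenfunction is nonnegative.\<close>

lemma eigenfunction_exceeds_negative_value:
  assumes eig: "\<And>j. (\<Sum>l\<in>UNIV. P$j$l * u l) = \<theta> * u j" and "\<theta> < 1" and "u i < 0"
  shows "\<exists>j. u i < u j"
proof (rule ccontr)
  assume "\<not> ?thesis"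
  then have "\<theta> * u i \<le> (\<Sum>l\<in>UNIV. P$i$l * u i)"
    unfolding eig[symmetric] by (intro sum_mono mult_left_mono P_nonneg) (simp add: not_less)
  then have "\<theta> * u i \<le> u i"
    by (simp add: sum_P_mult_const)
  then show False
    using assms by (simp add: mult_le_cancel_right2)
qed

lemma eigenfunction_with_max_above:
  assumes eigen: "real_eigenvalue P \<theta>" and "\<theta> < 1"
  obtains s j where "\<And>j. (\<Sum>l\<in>UNIV. P$j$l * s l) = \<theta> * s j" and "s i \<le> 0" and "s i < s j"
proof -
  obtain v where v: "v \<noteq> 0" "P *v v = \<theta> *s v"
    using eigen unfolding real_eigenvalue_def by blast
  have eig: "(\<Sum>l\<in>UNIV. P$j$l * v$l) = \<theta> * v$j" for j
    using v(2) by (simp add: vec_eq_iff matrix_vector_mult_def)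
  have eig_neg: "(\<Sum>l\<in>UNIV. P$j$l * - v$l) = \<theta> * - v$j" for j
    using eig[of j] by (simp add: sum_negf)
  obtain k where k: "v$k \<noteq> 0"
    using v(1) by (metis vec_eq_iff zero_index)
  consider "v$i < 0" | "v$i > 0" | "v$i = 0" "v$k > 0" | "v$i = 0" "v$k < 0"
    using k by linarith
  then show ?thesis
  proof cases
    case 1
    then show ?thesis
      using that[of "\<lambda>l. v$l"] eig eigenfunction_exceeds_negative_value[OF eig \<open>\<theta> < 1\<close>] by force
  next
    case 2
    then show ?thesis
      using that[of "\<lambda>l. - v$l"] eig_neg eigenfunction_exceeds_negative_value[OF eig_neg \<open>\<theta> < 1\<close>]
      by force
  next
    case 3
    then show ?thesis
      using that[of "\<lambda>l. v$l" k] eig by simp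
  next
    case 4
    then show ?thesis
      using that[of "\<lambda>l. - v$l" k] eig_neg by simp
  qed
qed

lemma killed_superharmonic_exists:
  assumes "real_eigenvalue P \<theta>" and "\<theta> < 1"
  obtains h where "h i = 0" and "\<And>j. \<theta> * h j \<le> (\<Sum>l\<in>UNIV. P$j$l * h l)" and "\<exists>j. 0 < h j"
proof -
  obtain s j where s: "\<And>j. (\<Sum>l\<in>UNIV. P$j$l * s l) = \<theta> * s j" "s i \<le> 0" "s i < s j"
    using eigenfunction_with_max_above[OF assms] by metis
  have "\<theta> * (s j - s i) \<le> (\<Sum>l\<in>UNIV. P$j$l * (s l - s i))" for j
  proof -
    have "(\<Sum>l\<in>UNIV. P$j$l * (s l - s i)) = (\<Sum>l\<in>UNIV. P$j$l * s l) - (\<Sum>l\<in>UNIV. P$j$l * s i)"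
      by (simp add: right_diff_distrib sum_subtractf)
    also have "\<dots> = \<theta> * (s j - s i) + (1 - \<theta>) * - s i"
      using s(1)[of j] by (simp only: sum_P_mult_const) (simp add: algebra_simps)
    finally show ?thesis
      using s(2) \<open>\<theta> < 1\<close> by (simp add: mult_nonneg_nonpos)
  qed
  with s(3) show ?thesis
    by (intro that[of "\<lambda>l. s l - s i"]) auto
qed

definition p_min :: real where
  "p_min = Min (range (\<lambda>j. p$j))"

lemma p_min_pos: "p_min > 0"
  unfolding p_min_def by (subst Min_gr_iff) (auto intro: p_pos)

lemma p_min_le: "p_min \<le> p$j"
  unfolding p_min_def by (rule Min_le) auto

text \<open>The n-step transition operator of the chain killed at i, applied to f.\<close>

definition killed_sum :: "'n \<Rightarrow> nat \<Rightarrow> ('n \<Rightarrow> real) \<Rightarrow> 'n \<Rightarrow> real" where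
  "killed_sum i n f j = (\<Sum>w | length w = Suc n \<and> hd w = j \<and> i \<notin> set w. path_weight P w * f (last w))"

lemma killed_sum_0: "j \<noteq> i \<Longrightarrow> killed_sum i 0 f j = f j"
proof -
  assume "j \<noteq> i"
  then have "{w. length w = Suc 0 \<and> hd w = j \<and> i \<notin> set w} = {[j]}"
    by (auto simp: length_Suc_conv)
  then show ?thesis by (simp add: killed_sum_def)
qed

lemma killed_sum_at_killed: "killed_sum i n f i = 0"
proof -
  have "hd w \<in> set w" if "length w = Suc n" for w :: "'n list"
    using that by (cases w) auto
  then have empty: "{w. length w = Suc n \<and> hd w = i \<and> i \<notin> set w} = {}"
    by blast
  show ?thesis unfolding killed_sum_def empty by simp
qed

lemma killed_sum_Suc: "j \<noteq> i \<Longrightarrow> killed_sum i (Suc n) f j = (\<Sum>l\<in>UNIV. P$j$l * killed_sum i n f l)"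
proof -
  assume j: "j \<noteq> i"
  let ?W = "{w. length w = Suc n \<and> i \<notin> set w}"
  have "{w. length w = Suc (Suc n) \<and> hd w = j \<and> i \<notin> set w} = (\<lambda>w. j # w) ` ?W"
    using j by (auto simp: length_Suc_conv)
  then have "killed_sum i (Suc n) f j = (\<Sum>w\<in>?W. path_weight P (j # w) * f (last (j # w)))"
    unfolding killed_sum_def by (simp add: sum.reindex)
  also have "\<dots> = (\<Sum>w\<in>?W. P$j$(hd w) * (path_weight P w * f (last w)))"
    by (intro sum.cong refl) (auto simp: path_weight_Cons)
  also have "\<dots> = (\<Sum>l\<in>UNIV. \<Sum>w | w \<in> ?W \<and> hd w = l. P$j$(hd w) * (path_weight P w * f (last w)))"
    by (rule sum.group[symmetric]) (auto intro: finite_length_eq_Collect)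
  also have "\<dots> = (\<Sum>l\<in>UNIV. P$j$l * killed_sum i n f l)"
    unfolding killed_sum_def sum_distrib_left by (intro sum.cong refl) (auto intro!: sum.cong)
  finally show ?thesis .
qed

lemma killed_sum_mono: "(\<And>l. f l \<le> g l) \<Longrightarrow> killed_sum i n f j \<le> killed_sum i n g j"
  unfolding killed_sum_def by (intro sum_mono mult_left_mono path_weight_nonneg) auto

lemma killed_sum_const: "killed_sum i n (\<lambda>_. c) j = c * killed_sum i n (\<lambda>_. 1) j"
  by (simp add: killed_sum_def sum_distrib_left mult.commute)

lemma killed_sum_superharmonic:
  assumes "\<theta> \<ge> 0" and "h i = 0" and superharm: "\<And>j. \<theta> * h j \<le> (\<Sum>l\<in>UNIV. P$j$l * h l)"
  shows "\<theta> ^ n * h j \<le> killed_sum i n h j"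
proof (induction n arbitrary: j)
  case 0
  show ?case using \<open>h i = 0\<close> by (cases "j = i") (simp_all add: killed_sum_0 killed_sum_at_killed)
next
  case (Suc n)
  show ?case
  proof (cases "j = i")
    case True then show ?thesis using \<open>h i = 0\<close> by (simp add: killed_sum_at_killed)
  next
    case False
    have "\<theta> ^ Suc n * h j = \<theta> ^ n * (\<theta> * h j)"
      by (simp add: mult.assoc)
    also have "\<dots> \<le> \<theta> ^ n * (\<Sum>l\<in>UNIV. P$j$l * h l)"
      using superharm[of j] \<open>\<theta> \<ge> 0\<close> by (simp add: mult_left_mono)
    also have "\<dots> = (\<Sum>l\<in>UNIV. P$j$l * (\<theta> ^ n * h l))"
      by (simp add: sum_distrib_left mult.left_commute)
    also have "\<dots> \<le> (\<Sum>l\<in>UNIV. P$j$l * killed_sum i n h l)"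
      by (intro sum_mono mult_left_mono Suc.IH P_nonneg)
    also have "\<dots> = killed_sum i (Suc n) h j"
      using False by (simp add: killed_sum_Suc)
    finally show ?thesis .
  qed
qed

end

section \<open>Words avoiding the hole\<close>

locale markov_hole = markov_shift A P p for A P :: "real^'n^'n" and p +
  fixes G :: "'n list set" and i0 :: 'n
  assumes finite_G: "finite G" and G_nonempty: "G \<noteq> {}"
    and allowed_G: "\<And>w. w \<in> G \<Longrightarrow> allowed_word A w"
    and i0_in_G: "\<And>w. w \<in> G \<Longrightarrow> i0 \<in> set w"
begin

definition free_prob :: "nat \<Rightarrow> real" where
  "free_prob n = (\<Sum>w | length w = n \<and> \<not> contains_factor G w. markov_cyl P p w)"

definition free_weight :: "nat \<Rightarrow> 'n \<Rightarrow> real" where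
  "free_weight n j = (\<Sum>w | length w = n \<and> hd w = j \<and> \<not> contains_factor G w. path_weight P w)"

definition max_free_weight :: "nat \<Rightarrow> real" where
  "max_free_weight n = Max (range (free_weight n))"

lemma free_weight_nonneg: "free_weight n j \<ge> 0"
  unfolding free_weight_def by (intro sum_nonneg path_weight_nonneg)

lemma free_weight_le_max: "free_weight n j \<le> max_free_weight n"
  unfolding max_free_weight_def by (rule Max_ge) auto

lemma max_free_weight_attained: "\<exists>j. max_free_weight n = free_weight n j"
proof -
  have "Max (range (free_weight n)) \<in> range (free_weight n)"
    by (rule Max_in) auto
  then show ?thesis
    unfolding max_free_weight_def by (metis rangeE)
qed

lemma max_free_weight_nonneg: "max_free_weight n \<ge> 0"
  using free_weight_nonneg[of n] free_weight_le_max[of n] by (meson order.trans)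

lemma free_weight_le_1:
  assumes "n \<ge> 1"
  shows "free_weight n j \<le> 1"
proof -
  have "free_weight n j \<le> (\<Sum>w | length w = n \<and> hd w = j. path_weight P w)"
    unfolding free_weight_def
    by (rule sum_mono2) (auto intro: finite_length_eq_Collect path_weight_nonneg)
  then show ?thesis
    using sum_path_weight_hd[OF assms] by simp
qed

lemma max_free_weight_le_1: "n \<ge> 1 \<Longrightarrow> max_free_weight n \<le> 1"
  using max_free_weight_attained[of n] free_weight_le_1[of n] by auto

lemma free_prob_eq_sum_free_weight: "n \<ge> 1 \<Longrightarrow> free_prob n = (\<Sum>j\<in>UNIV. p$j * free_weight n j)"
proof -
  assume n: "n \<ge> 1"
  let ?S = "{w. length w = n \<and> \<not> contains_factor G w}"
  have "free_prob n = (\<Sum>w\<in>?S. p$(hd w) * path_weight P w)"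
    unfolding free_prob_def using n by (intro sum.cong refl markov_cyl_conv_path_weight) auto
  also have "\<dots> = (\<Sum>j\<in>UNIV. \<Sum>w | w \<in> ?S \<and> hd w = j. p$(hd w) * path_weight P w)"
    by (rule sum.group[symmetric]) (auto intro: finite_length_eq_Collect)
  also have "\<dots> = (\<Sum>j\<in>UNIV. p$j * free_weight n j)"
    unfolding free_weight_def sum_distrib_left by (intro sum.cong refl) (auto intro!: sum.cong)
  finally show ?thesis .
qed

lemma free_prob_nonneg: "n \<ge> 1 \<Longrightarrow> free_prob n \<ge> 0"
  by (simp add: free_prob_eq_sum_free_weight sum_nonneg p_nonneg free_weight_nonneg)

lemma sum_transition_free_weight_le:
  "(\<Sum>y | length y = n \<and> \<not> contains_factor G y. P$c$(hd y) * path_weight P y) \<le> max_free_weight n"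
proof -
  let ?S = "{y. length y = n \<and> \<not> contains_factor G y}"
  have "(\<Sum>y\<in>?S. P$c$(hd y) * path_weight P y)
      = (\<Sum>l\<in>UNIV. \<Sum>y | y \<in> ?S \<and> hd y = l. P$c$(hd y) * path_weight P y)"
    by (rule sum.group[symmetric]) (auto intro: finite_length_eq_Collect)
  also have "\<dots> = (\<Sum>l\<in>UNIV. P$c$l * free_weight n l)"
    unfolding free_weight_def sum_distrib_left by (intro sum.cong refl) (auto intro!: sum.cong)
  also have "\<dots> \<le> (\<Sum>l\<in>UNIV. P$c$l * max_free_weight n)"
    by (intro sum_mono mult_left_mono free_weight_le_max P_nonneg)
  also have "\<dots> = max_free_weight n"
    by (rule sum_P_mult_const)
  finally show ?thesis .
qed

lemma free_weight_add_le:
  assumes m: "m \<ge> 1" and n: "n \<ge> 1"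
  shows "free_weight (m + n) j \<le> free_weight m j * max_free_weight n"
proof -
  let ?X = "{x. length x = m \<and> hd x = j \<and> \<not> contains_factor G x}"
  let ?Y = "{y. length y = n \<and> \<not> contains_factor G y}"
  have inj: "inj_on (\<lambda>(x, y). x @ y) (?X \<times> ?Y)"
    by (auto simp: inj_on_def)
  have fin: "finite ?X" "finite ?Y"
    by (simp_all add: finite_length_eq_Collect)
  have "free_weight (m + n) j \<le> (\<Sum>w\<in>(\<lambda>(x, y). x @ y) ` (?X \<times> ?Y). path_weight P w)"
    unfolding free_weight_def
    by (rule sum_mono2[OF _ free_words_append_subset[OF m]]) (use fin in \<open>simp_all add: path_weight_nonneg\<close>)
  also have "\<dots> = (\<Sum>x\<in>?X. \<Sum>y\<in>?Y. path_weight P (x @ y))"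
    by (subst sum.reindex[OF inj]) (simp add: sum.cartesian_product case_prod_unfold)
  also have "\<dots> = (\<Sum>x\<in>?X. path_weight P x * (\<Sum>y\<in>?Y. P$(last x)$(hd y) * path_weight P y))"
  proof (intro sum.cong refl)
    fix x assume "x \<in> ?X"
    then have "x \<noteq> []" using m by auto
    moreover have "y \<noteq> []" if "y \<in> ?Y" for y using that n by auto
    ultimately show "(\<Sum>y\<in>?Y. path_weight P (x @ y))
        = path_weight P x * (\<Sum>y\<in>?Y. P$(last x)$(hd y) * path_weight P y)"
      unfolding sum_distrib_left by (intro sum.cong refl) (simp add: path_weight_append mult.assoc)
  qed
  also have "\<dots> \<le> (\<Sum>x\<in>?X. path_weight P x * max_free_weight n)"
    by (intro sum_mono mult_left_mono sum_transition_free_weight_le path_weight_nonneg)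
  also have "\<dots> = free_weight m j * max_free_weight n"
    by (simp add: free_weight_def sum_distrib_right)
  finally show ?thesis .
qed

lemma max_free_weight_add_le:
  assumes "m \<ge> 1" and "n \<ge> 1"
  shows "max_free_weight (m + n) \<le> max_free_weight m * max_free_weight n"
proof -
  obtain j where "max_free_weight (m + n) = free_weight (m + n) j"
    using max_free_weight_attained by blast
  also have "\<dots> \<le> free_weight m j * max_free_weight n"
    using assms by (rule free_weight_add_le)
  also have "\<dots> \<le> max_free_weight m * max_free_weight n"
    by (intro mult_right_mono free_weight_le_max max_free_weight_nonneg)
  finally show ?thesis .
qed

lemma free_weight_antimono:
  assumes "m \<ge> 1" and "m \<le> n"
  shows "free_weight n j \<le> free_weight m j"
  using assms(2)
proof (induction n rule: dec_induct)
  case (step n)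
  have "free_weight (n + 1) j \<le> free_weight n j * max_free_weight 1"
    using step.hyps assms(1) by (intro free_weight_add_le) auto
  also have "\<dots> \<le> free_weight n j"
    using max_free_weight_le_1[of 1] by (simp add: free_weight_nonneg mult_left_le)
  finally show ?case using step.IH by simp
qed simp

lemma free_prob_le_max_free_weight: "n \<ge> 1 \<Longrightarrow> free_prob n \<le> max_free_weight n"
proof -
  assume n: "n \<ge> 1"
  have "free_prob n \<le> (\<Sum>j\<in>UNIV. p$j * max_free_weight n)"
    unfolding free_prob_eq_sum_free_weight[OF n] by (intro sum_mono mult_left_mono free_weight_le_max p_nonneg)
  also have "\<dots> = max_free_weight n"
    by (simp add: sum_distrib_right[symmetric] p_sum)
  finally show ?thesis .
qed

lemma p_min_mult_max_free_weight_le: "n \<ge> 1 \<Longrightarrow> p_min * max_free_weight n \<le> free_prob n"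
proof -
  assume n: "n \<ge> 1"
  obtain l where "max_free_weight n = free_weight n l"
    using max_free_weight_attained by blast
  then have "p_min * max_free_weight n \<le> p$l * free_weight n l"
    by (simp add: mult_right_mono p_min_le free_weight_nonneg)
  also have "\<dots> \<le> (\<Sum>j\<in>UNIV. p$j * free_weight n j)"
    by (rule member_le_sum) (auto intro: mult_nonneg_nonneg p_nonneg free_weight_nonneg)
  finally show ?thesis using free_prob_eq_sum_free_weight[OF n] by simp
qed

lemma free_prob_submult:
  assumes m: "m \<ge> 1" and n: "n \<ge> 1"
  shows "p_min * free_prob (m + n) \<le> free_prob m * free_prob n"
proof -
  have "free_prob (m + n) \<le> (\<Sum>j\<in>UNIV. p$j * (free_weight m j * max_free_weight n))"
    using m n free_prob_eq_sum_free_weight[of "m + n"]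
    by (simp add: sum_mono mult_left_mono free_weight_add_le p_nonneg)
  also have "\<dots> = free_prob m * max_free_weight n"
    by (simp add: free_prob_eq_sum_free_weight[OF m] sum_distrib_right mult.assoc)
  finally have "p_min * free_prob (m + n) \<le> free_prob m * (p_min * max_free_weight n)"
    using p_min_pos by (simp add: mult_left_mono mult.left_commute)
  also have "\<dots> \<le> free_prob m * free_prob n"
    by (intro mult_left_mono p_min_mult_max_free_weight_le free_prob_nonneg m n)
  finally show ?thesis .
qed

lemma nonempty_if_in_G: "u \<in> G \<Longrightarrow> u \<noteq> []"
  using i0_in_G by fastforce

lemma admissible_word_containing_G:
  obtains w where "admissible w" and "hd w = l" and "w \<noteq> []" and "contains_factor G w"
proof -
  obtain u where u: "u \<in> G"
    using G_nonempty by blast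
  then have adm_u: "admissible u" and u_ne: "u \<noteq> []"
    using allowed_G admissible_if_allowed_word nonempty_if_in_G by blast+
  obtain k where "(mpow A k)$l$(hd u) > 0"
    using irreducible unfolding irreducible_matrix_def by blast
  then obtain \<pi> where \<pi>: "length \<pi> = Suc k" "hd \<pi> = l" "last \<pi> = hd u" "admissible \<pi>"
    using admissible_path_if_mpow_pos by blast
  then have \<pi>_eq: "\<pi> = butlast \<pi> @ [hd u]"
    by (metis append_butlast_last_id list.size(3) nat.distinct(1))
  have u_eq: "u = hd u # tl u"
    using u_ne by simp
  have "admissible (butlast \<pi> @ u)"
    using \<pi>(4) adm_u \<pi>_eq u_eq by (metis admissible_glue)
  moreover have "hd (butlast \<pi> @ u) = l"
    using \<pi>(2) \<pi>_eq u_eq by (metis hd_append list.sel(1))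
  moreover have "contains_factor G (butlast \<pi> @ u)"
    unfolding contains_factor_def using u by (metis append.right_neutral)
  ultimately show ?thesis
    using u_ne by (intro that) auto
qed

lemma free_weight_lt_1: "\<exists>n\<ge>1. free_weight n l < 1"
proof -
  obtain w where w: "admissible w" "hd w = l" "w \<noteq> []" "contains_factor G w"
    by (rule admissible_word_containing_G)
  define n where "n = length w"
  let ?S = "{v. length v = n \<and> hd v = l}"
  have n: "n \<ge> 1" "w \<in> ?S"
    using w by (auto simp: n_def Suc_le_eq)
  have "free_weight n l \<le> (\<Sum>v\<in>?S - {w}. path_weight P v)"
    unfolding free_weight_def
    by (rule sum_mono2) (use w in \<open>auto intro: finite_length_eq_Collect path_weight_nonneg\<close>)
  also have "\<dots> = 1 - path_weight P w"
    using sum_diff1[of ?S "path_weight P" w] n sum_path_weight_hd[OF n(1)]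
    by (simp add: finite_length_eq_Collect)
  also have "\<dots> < 1"
    using path_weight_pos[OF w(1)] by simp
  finally show ?thesis using n(1) by blast
qed

lemma max_free_weight_lt_1: "\<exists>n\<ge>1. max_free_weight n < 1"
proof -
  obtain len where len: "\<And>l. len l \<ge> 1 \<and> free_weight (len l) l < 1"
    using free_weight_lt_1 by metis
  define n where "n = Max (range len)"
  have le_n: "len l \<le> n" for l
    unfolding n_def by (rule Max_ge) auto
  then have n: "n \<ge> 1"
    using len order.trans by blast
  have "free_weight n l < 1" for l
    using free_weight_antimono[of "len l" n l] len[of l] le_n[of l] by simp
  then show ?thesis
    using max_free_weight_attained[of n] n by metis
qed

lemma max_free_weight_mult_le_power:
  assumes "n \<ge> 1" and "k \<ge> 1"
  shows "max_free_weight (k * n) \<le> max_free_weight n ^ k"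
  using assms(2)
proof (induction k rule: nat_induct_at_least)
  case (Suc k)
  have "max_free_weight (Suc k * n) = max_free_weight (k * n + n)"
    by (simp add: add.commute)
  also have "\<dots> \<le> max_free_weight (k * n) * max_free_weight n"
    using Suc.hyps assms(1) by (intro max_free_weight_add_le) simp_all
  also have "\<dots> \<le> max_free_weight n ^ k * max_free_weight n"
    using Suc.IH by (intro mult_right_mono max_free_weight_nonneg)
  finally show ?case by (simp add: mult.commute)
qed simp

lemma free_prob_lt_p_min: "\<exists>n\<ge>1. free_prob n < p_min"
proof -
  obtain n where n: "n \<ge> 1" "max_free_weight n < 1"
    using max_free_weight_lt_1 by blast
  obtain k where k: "max_free_weight n ^ k < p_min"
    using real_arch_pow_inv[OF p_min_pos n(2)] by blast
  have "free_prob (Suc k * n) \<le> max_free_weight (Suc k * n)"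
    using n by (intro free_prob_le_max_free_weight) simp
  also have "\<dots> \<le> max_free_weight n ^ Suc k"
    using n by (intro max_free_weight_mult_le_power) simp_all
  also have "\<dots> \<le> max_free_weight n ^ k"
    using n max_free_weight_nonneg by (simp add: mult_left_le_one_le)
  finally show ?thesis
    using k n by (intro exI[of _ "Suc k * n"]) simp
qed

lemma free_prob_ge_killed_sum: "p$j * killed_sum i0 n (\<lambda>_. 1) j \<le> free_prob (Suc n)"
proof -
  let ?S = "{w. length w = Suc n \<and> hd w = j \<and> i0 \<notin> set w}"
  have sub: "?S \<subseteq> {w. length w = Suc n \<and> \<not> contains_factor G w}"
    using i0_in_G unfolding contains_factor_def by fastforce
  have "p$j * killed_sum i0 n (\<lambda>_. 1) j = (\<Sum>w\<in>?S. markov_cyl P p w)"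
    unfolding killed_sum_def sum_distrib_left
  proof (intro sum.cong refl)
    fix w assume "w \<in> ?S"
    then have "w \<noteq> []" and "hd w = j" by auto
    then show "p$j * (path_weight P w * 1) = markov_cyl P p w"
      by (simp add: markov_cyl_conv_path_weight)
  qed
  also have "\<dots> \<le> free_prob (Suc n)"
    unfolding free_prob_def
    by (rule sum_mono2[OF _ sub]) (auto intro: finite_length_eq_Collect markov_cyl_nonneg)
  finally show ?thesis .
qed

lemma free_prob_lower_bound:
  assumes "real_eigenvalue P \<theta>" and "\<theta> > 0" and "\<theta> \<noteq> 1"
  obtains c where "c > 0" and "\<And>n. c * \<theta> ^ n \<le> free_prob (Suc n)"
proof -
  have "\<theta> < 1"
    using abs_real_eigenvalue_le_1[OF assms(1)] assms(2,3) by simp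
  obtain h where h: "h i0 = 0" "\<And>j. \<theta> * h j \<le> (\<Sum>l\<in>UNIV. P$j$l * h l)" "\<exists>j. 0 < h j"
    using killed_superharmonic_exists[OF assms(1) \<open>\<theta> < 1\<close>, where i = i0] by blast
  obtain j where j: "0 < h j"
    using h(3) by blast
  obtain M where M: "\<And>l. h l \<le> h M"
    using obtain_argmax_finite_UNIV[of h] by metis
  have hM: "h M > 0"
    using j M[of j] by simp
  define c where "c = p$j * h j / h M"
  have "c > 0"
    using p_pos[of j] j hM by (simp add: c_def)
  moreover have "c * \<theta> ^ n \<le> free_prob (Suc n)" for n
  proof -
    have "\<theta> ^ n * h j \<le> killed_sum i0 n h j"
      using assms(2) h(1,2) by (intro killed_sum_superharmonic) simp_all
    also have "\<dots> \<le> killed_sum i0 n (\<lambda>_. h M) j"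
      by (rule killed_sum_mono) (rule M)
    also have "\<dots> = h M * killed_sum i0 n (\<lambda>_. 1) j"
      by (rule killed_sum_const)
    finally have le: "\<theta> ^ n * h j \<le> h M * killed_sum i0 n (\<lambda>_. 1) j" .
    have "c * \<theta> ^ n = p$j * (\<theta> ^ n * h j) / h M"
      by (simp add: c_def)
    also have "\<dots> \<le> p$j * (h M * killed_sum i0 n (\<lambda>_. 1) j) / h M"
      using hM by (intro divide_right_mono mult_left_mono le p_nonneg) simp
    also have "\<dots> = p$j * killed_sum i0 n (\<lambda>_. 1) j"
      using hM by simp
    also have "\<dots> \<le> free_prob (Suc n)"
      by (rule free_prob_ge_killed_sum)
    finally show ?thesis .
  qed
  ultimately show ?thesis
    by (rule that)
qed

definition max_length :: nat where
  "max_length = Max (length ` G)"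

lemma length_le_max_length: "u \<in> G \<Longrightarrow> length u \<le> max_length"
  unfolding max_length_def using finite_G by (intro Max_ge) auto

lemma max_length_pos: "max_length \<ge> 1"
proof -
  obtain u where "u \<in> G"
    using G_nonempty by blast
  then show ?thesis
    using length_le_max_length nonempty_if_in_G
    by (metis One_nat_def Suc_leI le_trans length_greater_0_conv)
qed

lemma survival_prob_eq:
  "survival_prob A P p G m
     = (\<Sum>w | length w = m + max_length \<and> cylinder A w \<subseteq> survivors A (hole A G) m. markov_cyl P p w)"
  unfolding survival_prob_def markov_meas_fin_def max_length_def ..

lemma cylinder_subset_survivors_if_free:
  assumes w: "length w = m + max_length" "\<not> contains_factor G w"
  shows "cylinder A w \<subseteq> survivors A (hole A G) m"
proof
  fix x assume "x \<in> cylinder A w"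
  then have x: "x \<in> SFT A" "\<And>k. k < length w \<Longrightarrow> x k = w!k"
    by (auto simp: cylinder_def)
  have "shift_pow i x \<notin> cylinder A u" if i: "i \<le> m" and u: "u \<in> G" for i u
  proof
    assume "shift_pow i x \<in> cylinder A u"
    then have xu: "\<And>k. k < length u \<Longrightarrow> x (k + i) = u!k"
      by (auto simp: cylinder_def shift_pow_def)
    have len: "i + length u \<le> length w"
      using length_le_max_length[OF u] i w(1) by simp
    have "u = take (length u) (drop i w)"
      using xu x(2) len by (intro nth_equalityI) (auto simp: add.commute)
    then have "w = take i w @ u @ drop (length u) (drop i w)"
      by (metis append_take_drop_id)
    then show False
      using w(2) u unfolding contains_factor_def by blast
  qed
  then show "x \<in> survivors A (hole A G) m"
    using x(1) by (auto simp: survivors_def hole_def)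
qed

lemma free_prob_le_survival_prob: "free_prob (m + max_length) \<le> survival_prob A P p G m"
proof -
  have "{w. length w = m + max_length \<and> \<not> contains_factor G w}
      \<subseteq> {w. length w = m + max_length \<and> cylinder A w \<subseteq> survivors A (hole A G) m}"
    using cylinder_subset_survivors_if_free by blast
  then show ?thesis
    unfolding survival_prob_eq free_prob_def
    by (rule sum_mono2[rotated]) (auto intro: finite_length_eq_Collect markov_cyl_nonneg)
qed

lemma free_prefix_if_cylinder_subset_survivors:
  assumes w: "length w = m + max_length" "admissible w" "cylinder A w \<subseteq> survivors A (hole A G) m"
  shows "\<not> contains_factor G (take (Suc m) w)"
proof
  assume "contains_factor G (take (Suc m) w)"
  then obtain u xs ys where u: "u \<in> G" "take (Suc m) w = xs @ u @ ys"
    unfolding contains_factor_def by blast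
  have len_w: "length w \<ge> Suc m"
    using w(1) max_length_pos by simp
  have "w \<noteq> []"
    using len_w by auto
  then obtain x where x: "x \<in> SFT A" "\<And>k. k < length w \<Longrightarrow> x k = w!k"
    using admissible_extends_to_SFT[OF w(2)] by metis
  then have "x \<in> survivors A (hole A G) m"
    using w(3) by (auto simp: cylinder_def)
  moreover have len: "length xs + length u \<le> Suc m"
    using arg_cong[OF u(2), of length] len_w by simp
  then have "length xs \<le> m"
    using nonempty_if_in_G[OF u(1)] by (cases u) auto
  moreover have "shift_pow (length xs) x \<in> cylinder A u"
  proof -
    have "shift_pow (length xs) x k = u!k" if k: "k < length u" for k
    proof -
      have "shift_pow (length xs) x k = take (Suc m) w ! (length xs + k)"
        using x(2) len k len_w by (simp add: shift_pow_def add.commute)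
      also have "\<dots> = u!k"
        using u(2) k by (simp add: nth_append)
      finally show ?thesis .
    qed
    moreover have "shift_pow (length xs) x \<in> SFT A"
      using x(1) by (simp add: SFT_def shift_pow_def)
    ultimately show ?thesis by (simp add: cylinder_def)
  qed
  ultimately show False
    using u(1) by (auto simp: survivors_def hole_def)
qed

lemma survival_prob_le_free_prob: "survival_prob A P p G m \<le> free_prob (Suc m)"
proof -
  let ?X = "{w. length w = m + max_length \<and> cylinder A w \<subseteq> survivors A (hole A G) m}"
  let ?Y = "{w. length w = m + max_length \<and> \<not> contains_factor G (take (Suc m) w)}"
  have "(\<Sum>w\<in>?X - ?Y. markov_cyl P p w) = 0"
  proof (rule sum.neutral, intro ballI)
    fix w assume w: "w \<in> ?X - ?Y"
    then have "\<not> admissible w" and "w \<noteq> []"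
      using free_prefix_if_cylinder_subset_survivors max_length_pos by auto
    then show "markov_cyl P p w = 0"
      by (simp add: markov_cyl_conv_path_weight path_weight_eq_0)
  qed
  moreover have "(\<Sum>w\<in>?X. markov_cyl P p w)
      = (\<Sum>w\<in>?X \<inter> ?Y. markov_cyl P p w) + (\<Sum>w\<in>?X - ?Y. markov_cyl P p w)"
    by (rule sum.Int_Diff) (simp add: finite_length_eq_Collect)
  ultimately have "survival_prob A P p G m = (\<Sum>w\<in>?X \<inter> ?Y. markov_cyl P p w)"
    unfolding survival_prob_eq by simp
  also have "\<dots> \<le> (\<Sum>w\<in>?Y. markov_cyl P p w)"
    by (rule sum_mono2) (auto intro: finite_length_eq_Collect markov_cyl_nonneg)
  also have "\<dots> = free_prob (Suc m)"
  proof -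
    have "m + max_length = Suc m + (max_length - 1)"
      using max_length_pos by simp
    then show ?thesis
      unfolding free_prob_def by (simp only:) (rule sum_markov_cyl_prefix, simp)
  qed
  finally show ?thesis .
qed

lemma free_prob_pos:
  assumes "real_eigenvalue P \<theta>" and "\<theta> > 0" and "\<theta> \<noteq> 1" and "n \<ge> 1"
  shows "free_prob n > 0"
proof -
  obtain c where c: "c > 0" "\<And>k. c * \<theta> ^ k \<le> free_prob (Suc k)"
    using free_prob_lower_bound[OF assms(1-3)] by blast
  have "0 < c * \<theta> ^ (n - 1)"
    using c(1) assms(2) by simp
  also have "\<dots> \<le> free_prob (Suc (n - 1))"
    by (rule c(2))
  finally show ?thesis
    using assms(4) by simp
qed

lemma superadditive_log_free_prob:
  assumes pos: "\<And>n. n \<ge> 1 \<Longrightarrow> free_prob n > 0" and "m \<ge> 1" and "n \<ge> 1"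
  shows "(ln p_min - ln (free_prob m)) + (ln p_min - ln (free_prob n)) \<le> ln p_min - ln (free_prob (m + n))"
proof -
  have fm: "free_prob m > 0" and fn: "free_prob n > 0" and fmn: "free_prob (m + n) > 0"
    using pos assms(2,3) by simp_all
  have "ln (p_min * free_prob (m + n)) \<le> ln (free_prob m * free_prob n)"
    using free_prob_submult[OF assms(2,3)] p_min_pos fm fn fmn by simp
  then show ?thesis
    using p_min_pos fm fn fmn by (simp add: ln_mult)
qed

lemma log_free_prob_linear_bound:
  assumes "c > 0" and "\<theta> > 0" and lower: "\<And>k. c * \<theta> ^ k \<le> free_prob (Suc k)" and n: "n \<ge> 1"
  shows "ln p_min - ln (free_prob n) \<le> (ln p_min - ln c + ln \<theta>) + - ln \<theta> * real n"
proof -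
  have "c * \<theta> ^ (n - 1) \<le> free_prob n"
    using lower[of "n - 1"] n by simp
  moreover have "0 < c * \<theta> ^ (n - 1)"
    using assms(1,2) by simp
  ultimately have "ln (c * \<theta> ^ (n - 1)) \<le> ln (free_prob n)"
    by simp
  then have "ln c + real (n - 1) * ln \<theta> \<le> ln (free_prob n)"
    using assms(1,2) by (simp add: ln_mult ln_realpow)
  then show ?thesis
    using n by (simp add: of_nat_diff algebra_simps)
qed

lemma free_prob_decay_rate:
  assumes "real_eigenvalue P \<theta>" and "\<theta> > 0" and "\<theta> \<noteq> 1"
  obtains \<rho> where "(\<lambda>n. - ln (free_prob n) / real n) \<longlonglongrightarrow> \<rho>"
    and "0 < \<rho>" and "\<rho> \<le> - ln \<theta>"
proof -
  obtain c where c: "c > 0" "\<And>n. c * \<theta> ^ n \<le> free_prob (Suc n)"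
    using free_prob_lower_bound[OF assms] by blast
  have pos: "\<And>n. n \<ge> 1 \<Longrightarrow> free_prob n > 0"
    using free_prob_pos[OF assms] by blast
  define F where "F n = ln p_min - ln (free_prob n)" for n
  have superadd: "F m + F n \<le> F (m + n)" if "m \<ge> 1" "n \<ge> 1" for m n
    unfolding F_def using superadditive_log_free_prob[OF pos that] .
  have linear: "F n \<le> (ln p_min - ln c + ln \<theta>) + - ln \<theta> * real n" if "n \<ge> 1" for n
    unfolding F_def using log_free_prob_linear_bound[OF c(1) assms(2) c(2) that] .
  obtain \<rho> where lim: "(\<lambda>n. F n / real n) \<longlonglongrightarrow> \<rho>"
    and le: "\<And>n. n \<ge> 1 \<Longrightarrow> F n / real n \<le> \<rho>" and "\<rho> \<le> - ln \<theta>"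
    using superadditive_ratio_limit[OF superadd linear] by metis
  have "(\<lambda>n. F n / real n - ln p_min / real n) \<longlonglongrightarrow> \<rho> - 0"
    by (intro tendsto_diff lim lim_const_over_n)
  then have "(\<lambda>n. - ln (free_prob n) / real n) \<longlonglongrightarrow> \<rho>"
    by (simp add: F_def diff_divide_distrib)
  moreover have "0 < \<rho>"
  proof -
    obtain n where n: "n \<ge> 1" "free_prob n < p_min"
      using free_prob_lt_p_min by blast
    then have "0 < F n / real n"
      using pos[OF n(1)] by (simp add: F_def)
    also have "\<dots> \<le> \<rho>"
      using n(1) by (rule le)
    finally show ?thesis .
  qed
  ultimately show ?thesis
    using \<open>\<rho> \<le> - ln \<theta>\<close> by (rule that)
qed

lemma survival_decay_rate:
  assumes lim: "(\<lambda>n. - ln (free_prob n) / real n) \<longlonglongrightarrow> \<rho>"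
    and pos: "\<And>n. n \<ge> 1 \<Longrightarrow> free_prob n > 0"
  shows "(\<lambda>m. - ln (survival_prob A P p G m) / real m) \<longlonglongrightarrow> \<rho>"
proof (rule tendsto_sandwich)
  have fp_pos: "free_prob (m + max_length) > 0" for m
    using pos max_length_pos by simp
  have surv_pos: "survival_prob A P p G m > 0" for m
    using fp_pos[of m] free_prob_le_survival_prob[of m] by linarith
  show "\<forall>\<^sub>F m in sequentially.
      - ln (free_prob (m + 1)) / real m \<le> - ln (survival_prob A P p G m) / real m"
    using surv_pos survival_prob_le_free_prob pos[of "Suc _"]
    by (intro always_eventually allI divide_right_mono) simp_all
  show "\<forall>\<^sub>F m in sequentially.
      - ln (survival_prob A P p G m) / real m \<le> - ln (free_prob (m + max_length)) / real m"
    using fp_pos surv_pos free_prob_le_survival_prob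
    by (intro always_eventually allI divide_right_mono) simp_all
  show "(\<lambda>m. - ln (free_prob (m + 1)) / real m) \<longlonglongrightarrow> \<rho>"
    and "(\<lambda>m. - ln (free_prob (m + max_length)) / real m) \<longlonglongrightarrow> \<rho>"
    using LIMSEQ_ratio_shift[OF lim] by blast+
qed

end

theorem corollary3p5:
  fixes A P :: "real^'n^'n" and p :: "real^'n" and \<theta> :: real and G :: "'n list set"
  assumes "zero_one_matrix A" and "irreducible_matrix A"
    and "row_stochastic P" and "\<forall>i j. P$i$j > 0 \<longleftrightarrow> A$i$j = 1"
    and "stationary_vector P p"
    and "real_eigenvalue P \<theta>" and "\<theta> > 0" and "\<theta> \<noteq> 1"
    and "\<forall>t. real_eigenvalue P t \<and> t > 0 \<and> t \<noteq> 1 \<longrightarrow> t \<le> \<theta>"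
    and "finite G" and "G \<noteq> {}" and "\<forall>w\<in>G. allowed_word A w"
    and "\<exists>i. \<forall>w\<in>G. i \<in> set w"
  shows "\<exists>\<rho>. ((\<lambda>m. - ln (survival_prob A P p G m) / real m) \<longlonglongrightarrow> \<rho>)
             \<and> 0 < \<rho> \<and> \<rho> \<le> - ln \<theta>"
proof -
  obtain i0 where "\<forall>w\<in>G. i0 \<in> set w"
    using assms(13) by blast
  then interpret markov_hole A P p G i0
    using assms by unfold_locales auto
  obtain \<rho> where \<rho>: "(\<lambda>n. - ln (free_prob n) / real n) \<longlonglongrightarrow> \<rho>" "0 < \<rho>" "\<rho> \<le> - ln \<theta>"
    using free_prob_decay_rate[OF assms(6-8)] by blast
  moreover have "(\<lambda>m. - ln (survival_prob A P p G m) / real m) \<longlonglongrightarrow> \<rho>"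
    using survival_decay_rate[OF \<rho>(1)] free_prob_pos[OF assms(6-8)] by blast
  ultimately show ?thesis
    by blast
qed

end
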